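(* Let $\mathcal{X}$ be a finite set of locations with metric $d$, let $\pi$ be a prior distribution on $\mathcal{X}$ with $\pi(x)>0$ for all $x$, let $\{\Phi_k\}$ be a partition of $\mathcal{X}$ into nonempty disjoint sets, and let $\epsilon_k\ge0$. Let $f(\cdot\mid\cdot)$ be an obfuscation mechanism with $f(x'\mid x)\le e^{\epsilon_k}f(x'\mid y)$ for all $x,y\in\Phi_k$, all $x'\in\mathcal{X}$ and all $k$. Then for every $x'\in\mathcal{X}$ with $\Pr(x')>0$, $$ExpEr(x')\ \ge\ \sum_k \Pr(\Phi_k\mid x')\,e^{-\epsilon_k}\,E'(\Phi_k),$$ where $\Pr(\Phi_k\mid x')=\sum_{y\in\Phi_k}\Pr(y\mid x')$ (and these satisfy $\sum_k\Pr(\Phi_k\mid x')=1$).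
   Context: An obfuscation mechanism is a family of probability distributions $f(\cdot\mid x)$ on $\mathcal{X}$, one for each true location $x\in\mathcal{X}$; $f(x'\mid x)$ is the probability of reporting pseudo-location $x'$ when the true location is $x$. Define $\Pr(x')=\sum_{x\in\mathcal{X}}\pi(x)f(x'\mid x)$ and, when $\Pr(x')>0$, the posterior $\Pr(x\mid x')=\pi(x)f(x'\mid x)/\Pr(x')$. The conditional expected inference error is $$ExpEr(x')=\min_{\hat{x}\in\mathcal{X}}\sum_{x\in\mathcal{X}}\Pr(x\mid x')\,d(\hat{x},x).$$ For a nonempty $\Phi\subseteq\mathcal{X}$, define $$E'(\Phi)=\min_{\hat{x}\in\mathcal{X}}\sum_{x\in\Phi}\frac{\pi(x)}{\sum_{y\in\Phi}\pi(y)}\,d(\hat{x},x).$$ *)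

theory Defs
  imports "HOL-Analysis.Analysis"
begin

text \<open>Locations form a finite set X. A mechanism f is written f x' x = f(x' | x).\<close>

definition is_metric_on :: "'a set \<Rightarrow> ('a \<Rightarrow> 'a \<Rightarrow> real) \<Rightarrow> bool" where
  "is_metric_on X d \<longleftrightarrow>
     (\<forall>x\<in>X. \<forall>y\<in>X. d x y \<ge> 0 \<and> (d x y = 0 \<longleftrightarrow> x = y) \<and> d x y = d y x) \<and>
     (\<forall>x\<in>X. \<forall>y\<in>X. \<forall>z\<in>X. d x z \<le> d x y + d y z)"

definition is_prior :: "'a set \<Rightarrow> ('a \<Rightarrow> real) \<Rightarrow> bool" where
  "is_prior X \<pi> \<longleftrightarrow> (\<forall>x\<in>X. \<pi> x \<ge> 0) \<and> (\<Sum>x\<in>X. \<pi> x) = 1"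

definition is_mechanism :: "'a set \<Rightarrow> ('a \<Rightarrow> 'a \<Rightarrow> real) \<Rightarrow> bool" where
  "is_mechanism X f \<longleftrightarrow> (\<forall>x\<in>X. (\<forall>x'\<in>X. f x' x \<ge> 0) \<and> (\<Sum>x'\<in>X. f x' x) = 1)"

definition Pr_obs :: "'a set \<Rightarrow> ('a \<Rightarrow> real) \<Rightarrow> ('a \<Rightarrow> 'a \<Rightarrow> real) \<Rightarrow> 'a \<Rightarrow> real" where
  "Pr_obs X \<pi> f x' = (\<Sum>x\<in>X. \<pi> x * f x' x)"

definition posterior :: "'a set \<Rightarrow> ('a \<Rightarrow> real) \<Rightarrow> ('a \<Rightarrow> 'a \<Rightarrow> real) \<Rightarrow> 'a \<Rightarrow> 'a \<Rightarrow> real" where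
  "posterior X \<pi> f x x' = \<pi> x * f x' x / Pr_obs X \<pi> f x'"

definition ExpEr :: "'a set \<Rightarrow> ('a \<Rightarrow> 'a \<Rightarrow> real) \<Rightarrow> ('a \<Rightarrow> real) \<Rightarrow> ('a \<Rightarrow> 'a \<Rightarrow> real) \<Rightarrow> 'a \<Rightarrow> real" where
  "ExpEr X d \<pi> f x' = Min ((\<lambda>xh. \<Sum>x\<in>X. posterior X \<pi> f x x' * d xh x) ` X)"

definition E' :: "'a set \<Rightarrow> ('a \<Rightarrow> 'a \<Rightarrow> real) \<Rightarrow> ('a \<Rightarrow> real) \<Rightarrow> 'a set \<Rightarrow> real" where
  "E' X d \<pi> \<Phi> = Min ((\<lambda>xh. \<Sum>x\<in>\<Phi>. \<pi> x / (\<Sum>y\<in>\<Phi>. \<pi> y) * d xh x) ` X)"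

definition Pr_set_post :: "'a set \<Rightarrow> ('a \<Rightarrow> real) \<Rightarrow> ('a \<Rightarrow> 'a \<Rightarrow> real) \<Rightarrow> 'a set \<Rightarrow> 'a \<Rightarrow> real" where
  "Pr_set_post X \<pi> f \<Phi> x' = (\<Sum>y\<in>\<Phi>. posterior X \<pi> f y x')"

end

theory Submission
  imports Defs
begin

text \<open>Fix a guess xh and split the expected error at xh along the partition. On a block A,
  the privacy constraint gives f(x'|y) \<le> e^\<epsilon>(A) f(x'|x) for x, y \<in> A, so the posterior of every
  x \<in> A is at least e^-\<epsilon>(A) Pr(A|x') times the prior of x normalised on A. The error of xh
  on A is therefore at least e^-\<epsilon>(A) Pr(A|x') E'(A), because E'(A) is a minimum over all
  guesses. Summing over the blocks and minimising over xh gives the bound.\<close>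

lemma posterior_ge_normalised_prior:
  assumes x: "x \<in> A"
    and prior_nonneg: "\<forall>y\<in>A. \<pi> y \<ge> 0" and prior_pos: "(\<Sum>y\<in>A. \<pi> y) > 0"
    and dp: "\<forall>y\<in>A. f x' y \<le> exp e * f x' x"
    and Pr_pos: "Pr_obs X \<pi> f x' > 0"
  shows "Pr_set_post X \<pi> f A x' * exp (- e) * (\<pi> x / (\<Sum>y\<in>A. \<pi> y)) \<le> posterior X \<pi> f x x'"
proof -
  define Pr where "Pr = Pr_obs X \<pi> f x'"
  define \<pi>A where "\<pi>A = (\<Sum>y\<in>A. \<pi> y)"
  have "(\<Sum>y\<in>A. \<pi> y * f x' y) \<le> (\<Sum>y\<in>A. \<pi> y * (exp e * f x' x))"
    using dp prior_nonneg by (intro sum_mono mult_left_mono) auto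
  also have "\<dots> = \<pi>A * (exp e * f x' x)"
    unfolding \<pi>A_def by (simp add: sum_distrib_right)
  finally have block_mass: "(\<Sum>y\<in>A. \<pi> y * f x' y) \<le> \<pi>A * (exp e * f x' x)" .
  have "Pr_set_post X \<pi> f A x' = (\<Sum>y\<in>A. \<pi> y * f x' y) / Pr"
    unfolding Pr_set_post_def posterior_def Pr_def by (simp add: sum_divide_distrib)
  also have "\<dots> \<le> \<pi>A * (exp e * f x' x) / Pr"
    using block_mass Pr_pos unfolding Pr_def by (simp add: divide_right_mono)
  finally have block_post: "Pr_set_post X \<pi> f A x' \<le> \<pi>A * (exp e * f x' x) / Pr" .
  have "Pr_set_post X \<pi> f A x' * exp (- e) * (\<pi> x / \<pi>A)
      \<le> \<pi>A * (exp e * f x' x) / Pr * exp (- e) * (\<pi> x / \<pi>A)"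
    using block_post prior_nonneg x prior_pos unfolding \<pi>A_def
    by (intro mult_right_mono) auto
  also have "\<dots> = posterior X \<pi> f x x'"
    using prior_pos unfolding posterior_def Pr_def \<pi>A_def by (simp add: exp_minus field_simps)
  finally show ?thesis unfolding \<pi>A_def .
qed

lemma block_error_ge_E':
  assumes finX: "finite X" and xh: "xh \<in> X" and AX: "A \<subseteq> X" and neA: "A \<noteq> {}"
    and metric: "is_metric_on X d" and mech: "is_mechanism X f" and x'X: "x' \<in> X"
    and prior_pos: "\<forall>x\<in>X. \<pi> x > 0"
    and dp: "\<forall>x\<in>A. \<forall>y\<in>A. f x' y \<le> exp e * f x' x"
    and Pr_pos: "Pr_obs X \<pi> f x' > 0"
  shows "Pr_set_post X \<pi> f A x' * exp (- e) * E' X d \<pi> A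
           \<le> (\<Sum>x\<in>A. posterior X \<pi> f x x' * d xh x)"
proof -
  define c where "c = Pr_set_post X \<pi> f A x' * exp (- e)"
  define \<pi>A where "\<pi>A = (\<Sum>y\<in>A. \<pi> y)"
  have finA: "finite A" using finX AX finite_subset by blast
  have \<pi>A_pos: "\<pi>A > 0"
    unfolding \<pi>A_def using finA neA AX prior_pos by (intro sum_pos) auto
  have "Pr_set_post X \<pi> f A x' \<ge> 0"
    using AX mech x'X prior_pos Pr_pos
    unfolding Pr_set_post_def posterior_def is_mechanism_def
    by (intro sum_nonneg divide_nonneg_nonneg mult_nonneg_nonneg) (auto simp: less_imp_le)
  then have c_nonneg: "c \<ge> 0" unfolding c_def by simp
  have "c * E' X d \<pi> A \<le> c * (\<Sum>x\<in>A. \<pi> x / \<pi>A * d xh x)"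
    unfolding E'_def \<pi>A_def using finX xh c_nonneg by (intro mult_left_mono Min_le) auto
  also have "\<dots> = (\<Sum>x\<in>A. c * (\<pi> x / \<pi>A) * d xh x)"
    by (simp add: sum_distrib_left mult_ac)
  also have "\<dots> \<le> (\<Sum>x\<in>A. posterior X \<pi> f x x' * d xh x)"
  proof (intro sum_mono mult_right_mono)
    fix x assume "x \<in> A"
    then show "c * (\<pi> x / \<pi>A) \<le> posterior X \<pi> f x x'"
      unfolding c_def \<pi>A_def using AX prior_pos \<pi>A_pos dp Pr_pos
      by (intro posterior_ge_normalised_prior) (auto simp: \<pi>A_def less_imp_le)
    show "d xh x \<ge> 0" using \<open>x \<in> A\<close> AX xh metric unfolding is_metric_on_def by blast
  qed
  finally show ?thesis unfolding c_def .
qed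

theorem mainTheorem2:
  fixes X :: "'a set" and d :: "'a \<Rightarrow> 'a \<Rightarrow> real" and \<pi> :: "'a \<Rightarrow> real"
    and P :: "'a set set" and \<epsilon> :: "'a set \<Rightarrow> real" and f :: "'a \<Rightarrow> 'a \<Rightarrow> real"
    and x' :: 'a
  assumes finX: "finite X" and neX: "X \<noteq> {}"
    and metric: "is_metric_on X d"
    and prior: "is_prior X \<pi>" and pos: "\<forall>x\<in>X. \<pi> x > 0"
    and part: "\<Union>P = X" "\<forall>A\<in>P. A \<noteq> {}"
      "\<forall>A\<in>P. \<forall>B\<in>P. A \<noteq> B \<longrightarrow> A \<inter> B = {}"
    and eps: "\<forall>A\<in>P. \<epsilon> A \<ge> 0"
    and mech: "is_mechanism X f"
    and dp: "\<forall>A\<in>P. \<forall>x\<in>A. \<forall>y\<in>A. \<forall>z\<in>X. f z x \<le> exp (\<epsilon> A) * f z y"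
    and x'X: "x' \<in> X" and prpos: "Pr_obs X \<pi> f x' > 0"
  shows "ExpEr X d \<pi> f x' \<ge> (\<Sum>A\<in>P. Pr_set_post X \<pi> f A x' * exp (- \<epsilon> A) * E' X d \<pi> A)"
proof -
  have finA: "\<forall>A\<in>P. finite A"
    using finX unfolding part(1)[symmetric] by (meson Union_upper finite_subset)
  have "(\<Sum>A\<in>P. Pr_set_post X \<pi> f A x' * exp (- \<epsilon> A) * E' X d \<pi> A)
          \<le> (\<Sum>x\<in>X. posterior X \<pi> f x x' * d xh x)" if xh: "xh \<in> X" for xh
  proof -
    have "(\<Sum>A\<in>P. Pr_set_post X \<pi> f A x' * exp (- \<epsilon> A) * E' X d \<pi> A)
            \<le> (\<Sum>A\<in>P. \<Sum>x\<in>A. posterior X \<pi> f x x' * d xh x)"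
    proof (rule sum_mono)
      fix A assume A: "A \<in> P"
      have "A \<subseteq> X" "A \<noteq> {}" using A part(1,2) by auto
      moreover have "\<forall>x\<in>A. \<forall>y\<in>A. f x' y \<le> exp (\<epsilon> A) * f x' x"
        using A dp x'X by blast
      ultimately show "Pr_set_post X \<pi> f A x' * exp (- \<epsilon> A) * E' X d \<pi> A
          \<le> (\<Sum>x\<in>A. posterior X \<pi> f x x' * d xh x)"
        by (rule block_error_ge_E'[OF finX xh _ _ metric mech x'X pos _ prpos])
    qed
    also have "\<dots> = (\<Sum>x\<in>\<Union>P. posterior X \<pi> f x x' * d xh x)"
      by (simp add: sum.Union_disjoint[OF finA part(3)])
    finally show ?thesis unfolding part(1) .
  qed
  then show ?thesis
    unfolding ExpEr_def using finX neX by (simp add: Min_ge_iff)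
qed

end
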